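(* For every $n\geq3$, the dominating ideal $DI(C_n)=\bigcap_{i=1}^n(x_i,x_{i+1},x_{i+2})\subset K[x_1,\ldots,x_n]$ (indices modulo $n$) of the cycle $C_n$ is nearly normally torsion-free.
   Context: $C_n$ is the cycle with vertices $x_1,\ldots,x_n$ and edges $\{x_i,x_{i+1}\}$ ($1\le i\le n-1$) and $\{x_n,x_1\}$. For a simple graph $G$, $N_G[i]=\{j:\{i,j\}\in E(G)\}\cup\{i\}$; $S\subseteq V(G)$ is a dominating set if $S\cap N_G[v]\neq\emptyset$ for all $v$, and $DI(G)=(\prod_{i\in S}x_i : S\text{ a minimal dominating set})$. A monomial ideal $I\subset R$ is nearly normally torsion-free if there exist a positive integer $k$ and a monomial prime ideal $\mathfrak p$ such that $\mathrm{Ass}(R/I^m)=\mathrm{Min}(I)$ for all $1\le m\le k$ and $\mathrm{Ass}(R/I^m)\subseteq\mathrm{Min}(I)\cup\{\mathfrak p\}$ for all $m\geq k+1$, where $\mathrm{Ass}$ and $\mathrm{Min}$ denote associated and minimal primes. *)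

theory Defs
  imports "HOL-Library.Poly_Mapping"
begin

text \<open>The ring K[x_1,...,x_n] is the subring of polynomials whose monomials only involve
the variables 0,...,n-1 (variable x_(i+1) of the paper is index i here).\<close>

type_synonym 'k mpoly = "(nat \<Rightarrow>\<^sub>0 nat) \<Rightarrow>\<^sub>0 'k"

definition polys :: "nat \<Rightarrow> 'k::field mpoly set" where
  "polys n = {p :: 'k mpoly. \<forall>m \<in> Poly_Mapping.keys p. Poly_Mapping.keys m \<subseteq> {..<n}}"

definition Var :: "nat \<Rightarrow> 'k::field mpoly" where
  "Var i = Poly_Mapping.single (Poly_Mapping.single i 1) 1"

definition is_ideal :: "nat \<Rightarrow> 'k::field mpoly set \<Rightarrow> bool" where
  "is_ideal n I \<longleftrightarrow> I \<subseteq> polys n \<and> 0 \<in> I \<and> (\<forall>f\<in>I. \<forall>g\<in>I. f + g \<in> I)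
     \<and> (\<forall>f\<in>I. \<forall>r\<in>polys n. r * f \<in> I)"

definition ideal_gen :: "nat \<Rightarrow> 'k::field mpoly set \<Rightarrow> 'k mpoly set" where
  "ideal_gen n G = \<Inter>{I. is_ideal n I \<and> G \<subseteq> I}"

definition is_monomial :: "nat \<Rightarrow> 'k::field mpoly \<Rightarrow> bool" where
  "is_monomial n p \<longleftrightarrow> (\<exists>m :: nat \<Rightarrow>\<^sub>0 nat. Poly_Mapping.keys m \<subseteq> {..<n} \<and> p = Poly_Mapping.single m 1)"

definition monomial_ideal :: "nat \<Rightarrow> 'k::field mpoly set \<Rightarrow> bool" where
  "monomial_ideal n I \<longleftrightarrow> (\<exists>G. (\<forall>g\<in>G. is_monomial n g) \<and> I = ideal_gen n G)"

definition prime_ideal :: "nat \<Rightarrow> 'k::field mpoly set \<Rightarrow> bool" where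
  "prime_ideal n P \<longleftrightarrow> is_ideal n P \<and> P \<noteq> polys n \<and>
     (\<forall>f\<in>polys n. \<forall>g\<in>polys n. f * g \<in> P \<longrightarrow> f \<in> P \<or> g \<in> P)"

fun ideal_pow :: "nat \<Rightarrow> 'k::field mpoly set \<Rightarrow> nat \<Rightarrow> 'k mpoly set" where
  "ideal_pow n I 0 = polys n"
| "ideal_pow n I (Suc m) = ideal_gen n {f * g | f g. f \<in> I \<and> g \<in> ideal_pow n I m}"

definition Ass :: "nat \<Rightarrow> 'k::field mpoly set \<Rightarrow> 'k mpoly set set" where
  "Ass n I = {P. prime_ideal n P \<and> (\<exists>f\<in>polys n. P = {g \<in> polys n. g * f \<in> I})}"

definition minprimes :: "nat \<Rightarrow> 'k::field mpoly set \<Rightarrow> 'k mpoly set set" where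
  "minprimes n I = {P. prime_ideal n P \<and> I \<subseteq> P \<and>
      (\<forall>Q. prime_ideal n Q \<and> I \<subseteq> Q \<and> Q \<subseteq> P \<longrightarrow> Q = P)}"

definition nearly_normally_torsion_free :: "nat \<Rightarrow> 'k::field mpoly set \<Rightarrow> bool" where
  "nearly_normally_torsion_free n I \<longleftrightarrow>
     (\<exists>k::nat. \<exists>\<pp>. k \<ge> 1 \<and> monomial_ideal n \<pp> \<and> prime_ideal n \<pp> \<and>
        (\<forall>m. 1 \<le> m \<and> m \<le> k \<longrightarrow> Ass n (ideal_pow n I m) = minprimes n I) \<and>
        (\<forall>m. m \<ge> k + 1 \<longrightarrow> Ass n (ideal_pow n I m) \<subseteq> minprimes n I \<union> {\<pp>}))"

definition cycle_adj :: "nat \<Rightarrow> nat \<Rightarrow> nat \<Rightarrow> bool" where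
  "cycle_adj n i j \<longleftrightarrow> i < n \<and> j < n \<and> i \<noteq> j \<and> (j = (i + 1) mod n \<or> i = (j + 1) mod n)"

definition closed_nbhd :: "nat \<Rightarrow> nat \<Rightarrow> nat set" where
  "closed_nbhd n i = {j. cycle_adj n i j} \<union> {i}"

definition dominating :: "nat \<Rightarrow> nat set \<Rightarrow> bool" where
  "dominating n S \<longleftrightarrow> S \<subseteq> {..<n} \<and> (\<forall>v<n. S \<inter> closed_nbhd n v \<noteq> {})"

definition minimal_dominating :: "nat \<Rightarrow> nat set \<Rightarrow> bool" where
  "minimal_dominating n S \<longleftrightarrow> dominating n S \<and> (\<forall>T. T \<subset> S \<longrightarrow> \<not> dominating n T)"

definition dominating_ideal_cycle :: "nat \<Rightarrow> 'k::field mpoly set" where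
  "dominating_ideal_cycle n =
     ideal_gen n {(\<Prod>i\<in>S. Var i) | S. minimal_dominating n S}"

end

theory Submission
  imports Defs
begin

(* Write P_W for the prime ideal generated by the variables indexed by W, and N[v] for the closed
   neighbourhood of v in C_n.  A monomial lies in DI(C_n) iff its support meets every N[v], so DI(C_n)
   is the intersection I of the P_N[v]; the N[v] are pairwise incomparable, hence these primes are
   exactly the minimal primes of I, and they are also all its associated primes.

   Every power I^m lies in the symbolic power I^(m), the intersection of the P_N[v]^m.  Conversely,
   x_j^m I^(m) is contained in I^m for every variable x_j: reading the exponents of a monomial of I^(m)
   around the cycle starting at x_j, they can be dealt out into m dominating sets, each completed by x_j.
   So an associated prime P = (I^m : f) of I^m that misses some x_j equals (I^(m) : x_j^m f); it is then
   associated to an intersection of the P_N[v]-primary ideals P_N[v]^m and hence is some P_N[v].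
   Otherwise P contains every variable and is the maximal ideal (x_1, ..., x_n). *)

abbreviation monom :: "(nat \<Rightarrow>\<^sub>0 nat) \<Rightarrow> 'k::field mpoly" where
  "monom \<mu> \<equiv> Poly_Mapping.single \<mu> 1"

section \<open>The polynomial ring and its ideals\<close>

lemma keys_add_nat:
  "Poly_Mapping.keys ((a::nat \<Rightarrow>\<^sub>0 nat) + b) = Poly_Mapping.keys a \<union> Poly_Mapping.keys b"
  by (auto simp: in_keys_iff lookup_add)

lemma polys_add: "p \<in> polys n \<Longrightarrow> q \<in> polys n \<Longrightarrow> p + q \<in> polys n"
  using keys_add[of p q] by (auto simp: polys_def)

lemma polys_mult: "p \<in> polys n \<Longrightarrow> q \<in> polys n \<Longrightarrow> p * q \<in> polys n"
  using keys_mult[of p q] by (fastforce simp: polys_def keys_add_nat)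

lemma polys_zero [simp]: "0 \<in> polys n"
  by (simp add: polys_def)

lemma polys_one [simp]: "1 \<in> polys n"
  by (simp add: polys_def)

lemma polys_single: "Poly_Mapping.keys \<mu> \<subseteq> {..<n} \<Longrightarrow> Poly_Mapping.single \<mu> c \<in> polys n"
  by (simp add: polys_def)

lemma polys_const: "Poly_Mapping.single 0 c \<in> polys n"
  by (simp add: polys_single)

lemma Var_in_polys: "i < n \<Longrightarrow> (Var i :: 'k::field mpoly) \<in> polys n"
  by (simp add: Var_def polys_def)

lemma polys_prod: "(\<And>a. a \<in> A \<Longrightarrow> F a \<in> polys n) \<Longrightarrow> prod F A \<in> polys n"
  by (induction A rule: infinite_finite_induct) (auto intro: polys_mult)

lemma Var_power: "(Var j :: 'k::field mpoly) ^ m = monom (Poly_Mapping.single j m)"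
  by (induction m) (simp_all add: Var_def mult_single single_add[symmetric])

lemma prod_monom: "(\<Prod>k\<in>A. (monom (f k) :: 'k::field mpoly)) = monom (\<Sum>k\<in>A. f k)"
  by (induction A rule: infinite_finite_induct) (simp_all add: mult_single)

definition indicator_exp :: "nat set \<Rightarrow> (nat \<Rightarrow>\<^sub>0 nat)" where
  "indicator_exp D = (\<Sum>i\<in>D. Poly_Mapping.single i 1)"

lemma lookup_indicator_exp: "finite D \<Longrightarrow> Poly_Mapping.lookup (indicator_exp D) i = of_bool (i \<in> D)"
  by (simp add: indicator_exp_def lookup_sum lookup_single when_def)

lemma keys_indicator_exp: "finite D \<Longrightarrow> Poly_Mapping.keys (indicator_exp D) = D"
  by (auto simp: in_keys_iff lookup_indicator_exp)

lemma lookup_sum_indicator_exp: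
  assumes "finite K" "\<And>k. k \<in> K \<Longrightarrow> finite (D k)"
  shows "Poly_Mapping.lookup (\<Sum>k\<in>K. indicator_exp (D k)) t = card {k \<in> K. t \<in> D k}"
proof -
  have "Poly_Mapping.lookup (\<Sum>k\<in>K. indicator_exp (D k)) t = (\<Sum>k\<in>K. of_bool (t \<in> D k))"
    unfolding lookup_sum using assms(2) by (intro sum.cong) (simp_all add: lookup_indicator_exp)
  also have "\<dots> = card (K \<inter> {k. t \<in> D k})"
    using assms(1) by simp
  finally show ?thesis
    by (simp add: Int_def)
qed

lemma prod_Var_eq_monom: "(\<Prod>i\<in>D. Var i) = (monom (indicator_exp D) :: 'k::field mpoly)"
  unfolding Var_def indicator_exp_def by (rule prod_monom)

lemma poly_eq_sum_single:
  "p = (\<Sum>\<mu>\<in>Poly_Mapping.keys p. Poly_Mapping.single \<mu> (Poly_Mapping.lookup p \<mu>))"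
proof (rule poly_mapping_eqI)
  fix k
  show "Poly_Mapping.lookup p k
      = Poly_Mapping.lookup (\<Sum>\<mu>\<in>Poly_Mapping.keys p. Poly_Mapping.single \<mu> (Poly_Mapping.lookup p \<mu>)) k"
    by (cases "k \<in> Poly_Mapping.keys p")
       (auto simp: lookup_sum lookup_single when_def in_keys_iff sum.delta)
qed

lemma is_ideal_polys: "is_ideal n (polys n)"
  by (simp add: is_ideal_def polys_add polys_mult)

lemma is_ideal_ideal_gen:
  assumes "G \<subseteq> polys n"
  shows "is_ideal n (ideal_gen n G)"
proof -
  have "polys n \<in> {I. is_ideal n I \<and> G \<subseteq> I}"
    using assms is_ideal_polys by blast
  then have "ideal_gen n G \<subseteq> polys n"
    unfolding ideal_gen_def by blast
  moreover have "0 \<in> ideal_gen n G"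
    unfolding ideal_gen_def by (auto simp: is_ideal_def)
  moreover have "\<forall>f\<in>ideal_gen n G. \<forall>g\<in>ideal_gen n G. f + g \<in> ideal_gen n G"
    unfolding ideal_gen_def by (auto simp: is_ideal_def)
  moreover have "\<forall>f\<in>ideal_gen n G. \<forall>r\<in>polys n. r * f \<in> ideal_gen n G"
    unfolding ideal_gen_def by (auto simp: is_ideal_def)
  ultimately show ?thesis
    by (simp add: is_ideal_def)
qed

lemma ideal_gen_superset: "G \<subseteq> ideal_gen n G"
  unfolding ideal_gen_def by blast

lemma ideal_gen_least: "is_ideal n J \<Longrightarrow> G \<subseteq> J \<Longrightarrow> ideal_gen n G \<subseteq> J"
  unfolding ideal_gen_def by blast

lemma ideal_subset_polys: "is_ideal n J \<Longrightarrow> f \<in> J \<Longrightarrow> f \<in> polys n"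
  by (auto simp: is_ideal_def)

lemma ideal_add: "is_ideal n J \<Longrightarrow> f \<in> J \<Longrightarrow> g \<in> J \<Longrightarrow> f + g \<in> J"
  by (simp add: is_ideal_def)

lemma ideal_mult_left: "is_ideal n J \<Longrightarrow> r \<in> polys n \<Longrightarrow> f \<in> J \<Longrightarrow> r * f \<in> J"
  by (simp add: is_ideal_def)

lemma ideal_mult_right: "is_ideal n J \<Longrightarrow> r \<in> polys n \<Longrightarrow> f \<in> J \<Longrightarrow> f * r \<in> J"
  by (simp add: is_ideal_def mult.commute)

lemma ideal_zero: "is_ideal n J \<Longrightarrow> 0 \<in> J"
  by (simp add: is_ideal_def)

lemma ideal_sum:
  assumes J: "is_ideal n J"
  shows "(\<And>x. x \<in> A \<Longrightarrow> F x \<in> J) \<Longrightarrow> sum F A \<in> J"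
  by (induction A rule: infinite_finite_induct) (auto intro: ideal_zero[OF J] ideal_add[OF J])

lemma ideal_mem_if_monoms_mem:
  assumes J: "is_ideal n J" and p: "p \<in> polys n"
    and monoms: "\<And>\<mu>. \<mu> \<in> Poly_Mapping.keys p \<Longrightarrow> (monom \<mu> :: 'k::field mpoly) \<in> J"
  shows "(p :: 'k mpoly) \<in> J"
proof -
  have "Poly_Mapping.single \<mu> (Poly_Mapping.lookup p \<mu>) \<in> J" if "\<mu> \<in> Poly_Mapping.keys p" for \<mu>
    using ideal_mult_left[OF J polys_const monoms[OF that]] by (simp add: mult_single)
  then show ?thesis
    by (subst poly_eq_sum_single) (rule ideal_sum[OF J])
qed

lemma monom_mem_ideal_mono:
  assumes J: "is_ideal n J" and \<nu>: "(monom \<nu> :: 'k::field mpoly) \<in> J"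
    and le: "\<And>i. Poly_Mapping.lookup \<nu> i \<le> Poly_Mapping.lookup \<mu> i"
    and \<mu>: "Poly_Mapping.keys \<mu> \<subseteq> {..<n}"
  shows "(monom \<mu> :: 'k mpoly) \<in> J"
proof -
  have \<mu>_eq: "\<mu> = (\<mu> - \<nu>) + \<nu>"
    by (rule poly_mapping_eqI) (simp add: lookup_add lookup_minus le)
  have "Poly_Mapping.keys (\<mu> - \<nu>) \<subseteq> Poly_Mapping.keys \<mu>"
    by (auto simp: in_keys_iff lookup_minus)
  then have "Poly_Mapping.keys (\<mu> - \<nu>) \<subseteq> {..<n}"
    using \<mu> by blast
  then have "(monom (\<mu> - \<nu>) :: 'k mpoly) * monom \<nu> \<in> J"
    by (intro ideal_mult_left[OF J polys_single \<nu>])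
  then show ?thesis
    by (subst \<mu>_eq) (simp add: mult_single)
qed

lemma is_ideal_colon:
  fixes x :: "'k::field mpoly"
  assumes I: "is_ideal n I" and x: "x \<in> polys n"
  shows "is_ideal n {q \<in> polys n. q * x \<in> I}"
  unfolding is_ideal_def
proof (intro conjI ballI)
  fix f g :: "'k mpoly"
  assume "f \<in> {q \<in> polys n. q * x \<in> I}" "g \<in> {q \<in> polys n. q * x \<in> I}"
  then show "f + g \<in> {q \<in> polys n. q * x \<in> I}"
    using ideal_add[OF I] by (simp add: polys_add distrib_right)
next
  fix f r :: "'k mpoly"
  assume f: "f \<in> {q \<in> polys n. q * x \<in> I}" and r: "r \<in> polys n"
  then have "r * (f * x) \<in> I"
    using ideal_mult_left[OF I r] by simp
  with f r show "r * f \<in> {q \<in> polys n. q * x \<in> I}"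
    by (simp add: polys_mult mult.assoc)
qed (use ideal_zero[OF I] in auto)

lemma prime_ideal_is_ideal: "prime_ideal n P \<Longrightarrow> is_ideal n P"
  by (simp add: prime_ideal_def)

lemma prime_idealD:
  "prime_ideal n P \<Longrightarrow> f \<in> polys n \<Longrightarrow> g \<in> polys n \<Longrightarrow> f * g \<in> P \<Longrightarrow> f \<in> P \<or> g \<in> P"
  by (simp add: prime_ideal_def)

lemma one_notin_prime_ideal:
  assumes P: "prime_ideal n (P :: 'k::field mpoly set)"
  shows "1 \<notin> P"
proof
  assume "1 \<in> P"
  then have "polys n \<subseteq> P"
    using ideal_mult_right[OF prime_ideal_is_ideal[OF P], of _ 1] by fastforce
  with P show False
    by (auto simp: prime_ideal_def is_ideal_def)
qed

lemma prime_ideal_prod: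
  assumes P: "prime_ideal n P" and "finite A" and F: "\<And>a. a \<in> A \<Longrightarrow> F a \<in> polys n"
    and "prod F A \<in> P"
  shows "\<exists>a\<in>A. F a \<in> P"
  using \<open>finite A\<close> F \<open>prod F A \<in> P\<close>
proof (induction A rule: finite_induct)
  case empty
  then show ?case using one_notin_prime_ideal[OF P] by simp
next
  case (insert x A)
  then have "F x \<in> P \<or> prod F A \<in> P"
    using P polys_prod[of A F n] by (simp add: prime_ideal_def)
  then show ?case using insert by auto
qed

lemma prime_ideal_power: "prime_ideal n P \<Longrightarrow> x \<in> polys n \<Longrightarrow> x ^ m \<in> P \<Longrightarrow> x \<in> P"
  using prime_ideal_prod[of n P "{..<m}" "\<lambda>_. x"] by auto

lemma prime_ideal_Inter_subset:
  assumes P: "prime_ideal n P" and "finite Ws" and Q: "\<And>W. W \<in> Ws \<Longrightarrow> is_ideal n (Q W)"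
    and sub: "{p \<in> polys n. \<forall>W\<in>Ws. p \<in> Q W} \<subseteq> P"
  shows "\<exists>W\<in>Ws. Q W \<subseteq> P"
proof (rule ccontr)
  assume "\<not> ?thesis"
  then have "\<forall>W\<in>Ws. \<exists>x. x \<in> Q W \<and> x \<notin> P"
    by auto
  then obtain a where a: "\<forall>W\<in>Ws. a W \<in> Q W \<and> a W \<notin> P"
    by (rule bchoice[THEN exE])
  have a_polys: "a W \<in> polys n" if W: "W \<in> Ws" for W
    using a W ideal_subset_polys[OF Q[OF W]] by blast
  have "prod a Ws \<in> Q W" if W: "W \<in> Ws" for W
  proof -
    have "prod a (Ws - {W}) \<in> polys n"
      by (rule polys_prod) (use a_polys in blast)
    moreover have "a W \<in> Q W"
      using a W by blast
    ultimately have "a W * prod a (Ws - {W}) \<in> Q W"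
      by (rule ideal_mult_right[OF Q[OF W]])
    with W \<open>finite Ws\<close> show ?thesis
      by (simp add: prod.remove)
  qed
  moreover have "prod a Ws \<in> polys n"
    by (rule polys_prod) (rule a_polys)
  ultimately have "prod a Ws \<in> {p \<in> polys n. \<forall>W\<in>Ws. p \<in> Q W}"
    by blast
  then have "prod a Ws \<in> P"
    by (rule subsetD[OF sub])
  with a_polys have "\<exists>W\<in>Ws. a W \<in> P"
    by (rule prime_ideal_prod[OF P \<open>finite Ws\<close>, of a])
  then obtain W where "W \<in> Ws" "a W \<in> P"
    by blast
  with a show False
    by blast
qed

lemma is_ideal_ideal_pow:
  assumes I: "is_ideal n I"
  shows "is_ideal n (ideal_pow n I m)"
proof (induction m)
  case 0
  then show ?case by (simp add: is_ideal_polys)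
next
  case (Suc m)
  have "f * g \<in> polys n" if "f \<in> I" "g \<in> ideal_pow n I m" for f g
    using ideal_subset_polys[OF I that(1)] ideal_subset_polys[OF Suc that(2)] by (rule polys_mult)
  then have "{f * g | f g. f \<in> I \<and> g \<in> ideal_pow n I m} \<subseteq> polys n"
    by blast
  then show ?case by (simp add: is_ideal_ideal_gen)
qed

lemma ideal_pow_1:
  assumes I: "is_ideal n I"
  shows "ideal_pow n I 1 = I"
proof
  have "{f * g | f g. f \<in> I \<and> g \<in> polys n} \<subseteq> I"
    using ideal_mult_right[OF I] by blast
  then show "ideal_pow n I 1 \<subseteq> I"
    using ideal_gen_least[OF I] by simp
  have "f \<in> {f * g | f g. f \<in> I \<and> g \<in> polys n}" if "f \<in> I" for f
  proof -
    have "f * 1 \<in> {f * g | f g. f \<in> I \<and> g \<in> polys n}"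
      using that polys_one by blast
    then show ?thesis by simp
  qed
  then show "I \<subseteq> ideal_pow n I 1"
    using ideal_gen_superset[of "{f * g | f g. f \<in> I \<and> g \<in> polys n}" n] by auto
qed

lemma prod_mem_ideal_pow:
  "(\<And>k. k < m \<Longrightarrow> F k \<in> I) \<Longrightarrow> (\<Prod>k<m. F k) \<in> ideal_pow n I m"
proof (induction m)
  case 0
  then show ?case by simp
next
  case (Suc m)
  then have "F m \<in> I" "(\<Prod>k<m. F k) \<in> ideal_pow n I m"
    by simp_all
  then have "F m * (\<Prod>k<m. F k) \<in> {f * g | f g. f \<in> I \<and> g \<in> ideal_pow n I m}"
    by blast
  then have "F m * (\<Prod>k<m. F k) \<in> ideal_pow n I (Suc m)"
    unfolding ideal_pow.simps by (rule subsetD[OF ideal_gen_superset])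
  moreover have "(\<Prod>k<Suc m. F k) = F m * (\<Prod>k<m. F k)"
    by (simp add: mult.commute)
  ultimately show ?case
    by (simp only:)
qed

section \<open>Weighted degrees and powers of variable primes\<close>

definition wdeg :: "nat set \<Rightarrow> (nat \<Rightarrow>\<^sub>0 nat) \<Rightarrow> nat" where
  "wdeg W \<mu> = (\<Sum>i\<in>W. Poly_Mapping.lookup \<mu> i)"

(* For W contained in {..<n}, the d-th power of the prime ideal generated by the variables in W. *)
definition wdeg_ideal :: "nat \<Rightarrow> nat set \<Rightarrow> nat \<Rightarrow> 'k::field mpoly set" where
  "wdeg_ideal n W d = {p \<in> polys n. \<forall>\<mu>\<in>Poly_Mapping.keys p. d \<le> wdeg W \<mu>}"

lemma wdeg_add: "wdeg W (a + b) = wdeg W a + wdeg W b"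
  by (simp add: wdeg_def lookup_add sum.distrib)

lemma wdeg_single: "finite W \<Longrightarrow> wdeg W (Poly_Mapping.single i k) = (if i \<in> W then k else 0)"
  by (simp add: wdeg_def lookup_single when_def sum.delta)

lemma one_le_wdeg_iff:
  assumes "finite W"
  shows "1 \<le> wdeg W \<mu> \<longleftrightarrow> Poly_Mapping.keys \<mu> \<inter> W \<noteq> {}"
proof -
  have "1 \<le> wdeg W \<mu> \<longleftrightarrow> wdeg W \<mu> \<noteq> 0"
    by arith
  also have "\<dots> \<longleftrightarrow> (\<exists>i\<in>W. Poly_Mapping.lookup \<mu> i \<noteq> 0)"
    using assms by (simp add: wdeg_def)
  also have "\<dots> \<longleftrightarrow> Poly_Mapping.keys \<mu> \<inter> W \<noteq> {}"
    by (auto simp: in_keys_iff)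
  finally show ?thesis .
qed

lemma wdeg_lessThan_pos:
  assumes "Poly_Mapping.keys \<mu> \<subseteq> {..<n}" "\<mu> \<noteq> 0"
  shows "1 \<le> wdeg {..<n} \<mu>"
proof -
  have "Poly_Mapping.keys \<mu> \<noteq> {}"
    using assms(2) by simp
  with assms(1) have "Poly_Mapping.keys \<mu> \<inter> {..<n} \<noteq> {}"
    by blast
  then show ?thesis
    using one_le_wdeg_iff[of "{..<n}" \<mu>] by simp
qed

lemma wdeg_keys_add:
  "\<forall>\<mu>\<in>Poly_Mapping.keys p. d \<le> wdeg W \<mu> \<Longrightarrow> \<forall>\<mu>\<in>Poly_Mapping.keys q. d \<le> wdeg W \<mu>
    \<Longrightarrow> \<forall>\<mu>\<in>Poly_Mapping.keys (p + q). d \<le> wdeg W \<mu>"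
  using keys_add[of p q] by blast

lemma wdeg_keys_mult:
  assumes "\<forall>\<mu>\<in>Poly_Mapping.keys p. a \<le> wdeg W \<mu>" "\<forall>\<mu>\<in>Poly_Mapping.keys q. b \<le> wdeg W \<mu>"
  shows "\<forall>\<mu>\<in>Poly_Mapping.keys (p * (q :: 'k::field mpoly)). a + b \<le> wdeg W \<mu>"
  using keys_mult[of p q] assms by (fastforce simp: wdeg_add intro: add_mono)

lemma wdeg_ideal_0 [simp]: "wdeg_ideal n W 0 = polys n"
  by (auto simp: wdeg_ideal_def)

lemma wdeg_ideal_mult:
  "p \<in> wdeg_ideal n W a \<Longrightarrow> q \<in> wdeg_ideal n W b \<Longrightarrow> p * q \<in> wdeg_ideal n W (a + b)"
  using wdeg_keys_mult[of p a W q b] by (auto simp: wdeg_ideal_def polys_mult)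

lemma is_ideal_wdeg_ideal: "is_ideal n (wdeg_ideal n W d)"
  unfolding is_ideal_def
proof (intro conjI ballI)
  show "\<And>f g. f \<in> wdeg_ideal n W d \<Longrightarrow> g \<in> wdeg_ideal n W d \<Longrightarrow> f + g \<in> wdeg_ideal n W d"
    unfolding wdeg_ideal_def using wdeg_keys_add polys_add by blast
  show "\<And>f r. f \<in> wdeg_ideal n W d \<Longrightarrow> r \<in> polys n \<Longrightarrow> r * f \<in> wdeg_ideal n W d"
    using wdeg_ideal_mult[of _ n W 0 _ d] by simp
qed (auto simp: wdeg_ideal_def)

lemma Var_in_wdeg_ideal_1_iff:
  "finite W \<Longrightarrow> i < n \<Longrightarrow> (Var i :: 'k::field mpoly) \<in> wdeg_ideal n W 1 \<longleftrightarrow> i \<in> W"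
  by (simp add: wdeg_ideal_def Var_def polys_def wdeg_single)

lemma monom_in_wdeg_ideal_1_iff:
  "finite W \<Longrightarrow> (monom \<mu> :: 'k::field mpoly) \<in> wdeg_ideal n W 1
     \<longleftrightarrow> Poly_Mapping.keys \<mu> \<subseteq> {..<n} \<and> Poly_Mapping.keys \<mu> \<inter> W \<noteq> {}"
  using one_le_wdeg_iff[of W \<mu>] by (simp add: wdeg_ideal_def polys_def)

lemma monom_compl_in_wdeg_ideal_1_iff:
  assumes "W' \<subseteq> {..<n}"
  shows "(monom (indicator_exp ({..<n} - W)) :: 'k::field mpoly) \<in> wdeg_ideal n W' 1 \<longleftrightarrow> \<not> W' \<subseteq> W"
proof -
  have "finite W'"
    using assms by (rule finite_subset) simp
  with assms show ?thesis
    using monom_in_wdeg_ideal_1_iff[of W' "indicator_exp ({..<n} - W)" n, where 'k = 'k]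
    by (auto simp: keys_indicator_exp)
qed

lemma Var_power_in_wdeg_ideal:
  "finite W \<Longrightarrow> i \<in> W \<Longrightarrow> i < n \<Longrightarrow> (Var i :: 'k::field mpoly) ^ m \<in> wdeg_ideal n W m"
  by (simp add: Var_power wdeg_ideal_def polys_def wdeg_single)

definition restrict_keys :: "((nat \<Rightarrow>\<^sub>0 nat) \<Rightarrow> bool) \<Rightarrow> 'k::field mpoly \<Rightarrow> 'k mpoly" where
  "restrict_keys P p = Abs_poly_mapping (\<lambda>\<mu>. if P \<mu> then Poly_Mapping.lookup p \<mu> else 0)"

lemma lookup_restrict_keys:
  "Poly_Mapping.lookup (restrict_keys P p) \<mu> = (if P \<mu> then Poly_Mapping.lookup p \<mu> else 0)"
proof -
  have "{\<mu>. (if P \<mu> then Poly_Mapping.lookup p \<mu> else 0) \<noteq> 0} \<subseteq> Poly_Mapping.keys p"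
    by (auto simp: in_keys_iff)
  then have "finite {\<mu>. (if P \<mu> then Poly_Mapping.lookup p \<mu> else 0) \<noteq> 0}"
    by (rule finite_subset) simp
  then show ?thesis
    by (simp add: restrict_keys_def)
qed

lemma keys_restrict_keys:
  "Poly_Mapping.keys (restrict_keys P p) = {\<mu> \<in> Poly_Mapping.keys p. P \<mu>}"
  by (auto simp: in_keys_iff lookup_restrict_keys split: if_splits)

lemma restrict_keys_split: "p = restrict_keys P p + restrict_keys (\<lambda>\<mu>. \<not> P \<mu>) p"
  by (rule poly_mapping_eqI) (simp add: lookup_add lookup_restrict_keys)

lemma lowest_wdeg_decomp:
  fixes g :: "'k::field mpoly" and W :: "nat set"
  assumes "g \<noteq> 0"
  defines "d \<equiv> Min (wdeg W ` Poly_Mapping.keys g)"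
  obtains g0 g1 where "g = g0 + g1" "g0 \<noteq> 0"
    "\<forall>\<mu>\<in>Poly_Mapping.keys g0. wdeg W \<mu> = d" "\<forall>\<mu>\<in>Poly_Mapping.keys g1. d + 1 \<le> wdeg W \<mu>"
proof
  have keys: "finite (wdeg W ` Poly_Mapping.keys g)" "wdeg W ` Poly_Mapping.keys g \<noteq> {}"
    using assms(1) by auto
  then have "d \<in> wdeg W ` Poly_Mapping.keys g"
    unfolding d_def by (rule Min_in)
  then obtain a where a: "a \<in> Poly_Mapping.keys g" "wdeg W a = d"
    by blast
  have min: "d \<le> wdeg W \<mu>" if "\<mu> \<in> Poly_Mapping.keys g" for \<mu>
    unfolding d_def using keys(1) by (rule Min_le) (use that in blast)
  show "g = restrict_keys (\<lambda>\<mu>. wdeg W \<mu> = d) g + restrict_keys (\<lambda>\<mu>. wdeg W \<mu> \<noteq> d) g"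
    by (rule restrict_keys_split)
  have "a \<in> Poly_Mapping.keys (restrict_keys (\<lambda>\<mu>. wdeg W \<mu> = d) g)"
    using a by (simp add: keys_restrict_keys)
  then show "restrict_keys (\<lambda>\<mu>. wdeg W \<mu> = d) g \<noteq> 0"
    by auto
  show "\<forall>\<mu>\<in>Poly_Mapping.keys (restrict_keys (\<lambda>\<mu>. wdeg W \<mu> = d) g). wdeg W \<mu> = d"
    by (simp add: keys_restrict_keys)
  show "\<forall>\<mu>\<in>Poly_Mapping.keys (restrict_keys (\<lambda>\<mu>. wdeg W \<mu> \<noteq> d) g). d + 1 \<le> wdeg W \<mu>"
  proof
    fix \<mu>
    assume "\<mu> \<in> Poly_Mapping.keys (restrict_keys (\<lambda>\<mu>. wdeg W \<mu> \<noteq> d) g)"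
    then have "d \<le> wdeg W \<mu>" "wdeg W \<mu> \<noteq> d"
      using min by (simp_all add: keys_restrict_keys)
    then show "d + 1 \<le> wdeg W \<mu>"
      by linarith
  qed
qed

lemma wdeg_lowest_key_mult:
  fixes g h :: "'k::field mpoly"
  assumes "g \<noteq> 0" "h \<noteq> 0"
  shows "\<exists>\<rho>\<in>Poly_Mapping.keys (g * h).
           wdeg W \<rho> = Min (wdeg W ` Poly_Mapping.keys g) + Min (wdeg W ` Poly_Mapping.keys h)"
proof -
  define a where "a = Min (wdeg W ` Poly_Mapping.keys g)"
  define b where "b = Min (wdeg W ` Poly_Mapping.keys h)"
  obtain g0 g1 where g: "g = g0 + g1" "g0 \<noteq> 0"
    and g0: "\<forall>\<mu>\<in>Poly_Mapping.keys g0. wdeg W \<mu> = a" and g1: "\<forall>\<mu>\<in>Poly_Mapping.keys g1. a + 1 \<le> wdeg W \<mu>"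
    using lowest_wdeg_decomp[OF assms(1)] unfolding a_def by blast
  obtain h0 h1 where h: "h = h0 + h1" "h0 \<noteq> 0"
    and h0: "\<forall>\<mu>\<in>Poly_Mapping.keys h0. wdeg W \<mu> = b" and h1: "\<forall>\<mu>\<in>Poly_Mapping.keys h1. b + 1 \<le> wdeg W \<mu>"
    using lowest_wdeg_decomp[OF assms(2)] unfolding b_def by blast
  have g0': "\<forall>\<mu>\<in>Poly_Mapping.keys g0. a \<le> wdeg W \<mu>"
    using g0 by simp
  have h': "\<forall>\<mu>\<in>Poly_Mapping.keys h. b \<le> wdeg W \<mu>"
    unfolding b_def by simp
  have "g0 * h0 \<noteq> 0"
    using g(2) h(2) by simp
  then obtain \<rho> where \<rho>: "\<rho> \<in> Poly_Mapping.keys (g0 * h0)"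
    by (meson ex_in_conv keys_eq_empty)
  then obtain x y where "\<rho> = x + y" "x \<in> Poly_Mapping.keys g0" "y \<in> Poly_Mapping.keys h0"
    using keys_mult[of g0 h0] by blast
  then have deg_\<rho>: "wdeg W \<rho> = a + b"
    using g0 h0 by (simp add: wdeg_add)
  have "\<forall>\<mu>\<in>Poly_Mapping.keys (g0 * h1 + g1 * h). a + b + 1 \<le> wdeg W \<mu>"
    using wdeg_keys_mult[OF g0' h1] wdeg_keys_mult[OF g1 h'] by (intro wdeg_keys_add) (simp_all add: add_ac)
  with deg_\<rho> have "\<rho> \<notin> Poly_Mapping.keys (g0 * h1 + g1 * h)"
    by fastforce
  moreover have "g * h = g0 * h0 + (g0 * h1 + g1 * h)"
    using g(1) h(1) by (simp add: algebra_simps)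
  ultimately have "\<rho> \<in> Poly_Mapping.keys (g * h)"
    using \<rho> by (simp add: in_keys_iff lookup_add)
  with deg_\<rho> show ?thesis
    unfolding a_def b_def by blast
qed

lemma wdeg_ideal_primary:
  fixes g h :: "'k::field mpoly"
  assumes "g \<in> polys n" "h \<in> polys n" "g \<notin> wdeg_ideal n W 1" "h \<notin> wdeg_ideal n W m"
  shows "g * h \<notin> wdeg_ideal n W m"
proof
  obtain \<alpha> where \<alpha>: "\<alpha> \<in> Poly_Mapping.keys g" "wdeg W \<alpha> = 0"
    using assms(1,3) by (auto simp: wdeg_ideal_def not_le)
  obtain \<beta> where \<beta>: "\<beta> \<in> Poly_Mapping.keys h" "wdeg W \<beta> < m"
    using assms(2,4) by (auto simp: wdeg_ideal_def not_le)
  have "g \<noteq> 0" "h \<noteq> 0"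
    using \<alpha>(1) \<beta>(1) by auto
  then obtain \<rho> where \<rho>: "\<rho> \<in> Poly_Mapping.keys (g * h)"
    and deg_\<rho>: "wdeg W \<rho> = Min (wdeg W ` Poly_Mapping.keys g) + Min (wdeg W ` Poly_Mapping.keys h)"
    using wdeg_lowest_key_mult by blast
  have "Min (wdeg W ` Poly_Mapping.keys g) \<le> wdeg W \<alpha>" "Min (wdeg W ` Poly_Mapping.keys h) \<le> wdeg W \<beta>"
    using \<alpha>(1) \<beta>(1) by simp_all
  with \<alpha>(2) \<beta>(2) deg_\<rho> have "wdeg W \<rho> < m"
    by linarith
  with \<rho> show "g * h \<in> wdeg_ideal n W m \<Longrightarrow> False"
    by (auto simp: wdeg_ideal_def not_le)
qed

lemma prime_wdeg_ideal_1: "prime_ideal n (wdeg_ideal n W 1 :: 'k::field mpoly set)"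
  unfolding prime_ideal_def
proof (intro conjI ballI impI)
  show "is_ideal n (wdeg_ideal n W 1 :: 'k mpoly set)"
    by (rule is_ideal_wdeg_ideal)
  have "(1 :: 'k mpoly) \<notin> wdeg_ideal n W 1"
    by (simp add: wdeg_ideal_def wdeg_def)
  then show "wdeg_ideal n W 1 \<noteq> (polys n :: 'k mpoly set)"
    using polys_one by blast
  fix f g :: "'k mpoly"
  assume "f \<in> polys n" "g \<in> polys n" "f * g \<in> wdeg_ideal n W 1"
  then show "f \<in> wdeg_ideal n W 1 \<or> g \<in> wdeg_ideal n W 1"
    using wdeg_ideal_primary[of f n g W 1] by blast
qed

lemma ideal_gen_Var_eq_wdeg_ideal_1:
  assumes W: "W \<subseteq> {..<n}"
  shows "ideal_gen n {Var i | i. i \<in> W} = (wdeg_ideal n W 1 :: 'k::field mpoly set)"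
proof
  have fin: "finite W"
    using W by (rule finite_subset) simp
  have "(Var i :: 'k mpoly) \<in> wdeg_ideal n W 1" if "i \<in> W" for i
    using that W Var_in_wdeg_ideal_1_iff[OF fin] by blast
  then show "ideal_gen n {Var i | i. i \<in> W} \<subseteq> (wdeg_ideal n W 1 :: 'k mpoly set)"
    by (intro ideal_gen_least[OF is_ideal_wdeg_ideal]) blast
  have "{Var i | i. i \<in> W} \<subseteq> (polys n :: 'k mpoly set)"
    using W by (auto intro: Var_in_polys)
  note J = is_ideal_ideal_gen[OF this]
  show "(wdeg_ideal n W 1 :: 'k mpoly set) \<subseteq> ideal_gen n {Var i | i. i \<in> W}"
  proof
    fix p :: "'k mpoly"
    assume p: "p \<in> wdeg_ideal n W 1"
    show "p \<in> ideal_gen n {Var i | i. i \<in> W}"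
    proof (rule ideal_mem_if_monoms_mem[OF J])
      show "p \<in> polys n"
        using p by (simp add: wdeg_ideal_def)
      fix \<mu>
      assume \<mu>: "\<mu> \<in> Poly_Mapping.keys p"
      then have "1 \<le> wdeg W \<mu>"
        using p by (simp add: wdeg_ideal_def)
      then obtain i where i: "i \<in> W" "Poly_Mapping.lookup \<mu> i \<noteq> 0"
        using one_le_wdeg_iff[OF fin, of \<mu>] by (auto simp: in_keys_iff)
      then have "(Var i :: 'k mpoly) \<in> {Var i | i. i \<in> W}"
        by blast
      then have "(monom (Poly_Mapping.single i 1) :: 'k mpoly) \<in> ideal_gen n {Var i | i. i \<in> W}"
        unfolding Var_def by (rule subsetD[OF ideal_gen_superset])
      moreover have "Poly_Mapping.lookup (Poly_Mapping.single i 1) l \<le> Poly_Mapping.lookup \<mu> l" for l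
        using i(2) by (auto simp: lookup_single when_def)
      moreover have "Poly_Mapping.keys \<mu> \<subseteq> {..<n}"
        using p \<mu> by (simp add: wdeg_ideal_def polys_def)
      ultimately show "(monom \<mu> :: 'k mpoly) \<in> ideal_gen n {Var i | i. i \<in> W}"
        by (rule monom_mem_ideal_mono[OF J])
    qed
  qed
qed

lemma wdeg_ideal_1_least:
  assumes "W \<subseteq> {..<n}" "is_ideal n Q" "\<And>i. i \<in> W \<Longrightarrow> (Var i :: 'k::field mpoly) \<in> Q"
  shows "(wdeg_ideal n W 1 :: 'k mpoly set) \<subseteq> Q"
  using assms ideal_gen_least[of n Q "{Var i | i. i \<in> W}"]
  by (auto simp: ideal_gen_Var_eq_wdeg_ideal_1)

lemma monomial_ideal_wdeg_ideal_1:
  assumes "W \<subseteq> {..<n}"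
  shows "monomial_ideal n (wdeg_ideal n W 1 :: 'k::field mpoly set)"
  unfolding monomial_ideal_def
proof (intro exI conjI ballI)
  show "wdeg_ideal n W 1 = ideal_gen n {Var i | i. i \<in> W}"
    by (rule ideal_gen_Var_eq_wdeg_ideal_1[OF assms, symmetric])
  fix g :: "'k mpoly"
  assume "g \<in> {Var i | i. i \<in> W}"
  then obtain i where "g = Var i" "i \<in> W"
    by blast
  with assms show "is_monomial n g"
    unfolding is_monomial_def Var_def by (intro exI[of _ "Poly_Mapping.single i 1"]) auto
qed

lemma subset_if_wdeg_ideal_1_subset:
  assumes "W \<subseteq> {..<n}" "finite W'"
    and "(wdeg_ideal n W 1 :: 'k::field mpoly set) \<subseteq> wdeg_ideal n W' 1"
  shows "W \<subseteq> W'"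
proof
  fix i
  assume "i \<in> W"
  with assms(1) have "i < n" "finite W"
    using finite_subset by auto
  with \<open>i \<in> W\<close> assms show "i \<in> W'"
    using Var_in_wdeg_ideal_1_iff[where 'k = 'k] by blast
qed

lemma wdeg_ideal_lessThan_maximal:
  assumes P: "is_ideal n P" "1 \<notin> P" and M: "(wdeg_ideal n {..<n} 1 :: 'k::field mpoly set) \<subseteq> P"
  shows "P = wdeg_ideal n {..<n} 1"
proof (rule ccontr)
  assume "P \<noteq> wdeg_ideal n {..<n} 1"
  with M obtain g where g: "g \<in> P" "g \<notin> wdeg_ideal n {..<n} 1"
    by blast
  have g_polys: "g \<in> polys n"
    using P(1) g(1) by (rule ideal_subset_polys)
  with g(2) obtain \<mu> where "\<mu> \<in> Poly_Mapping.keys g" "wdeg {..<n} \<mu> < 1"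
    by (auto simp: wdeg_ideal_def not_le)
  with g_polys have "0 \<in> Poly_Mapping.keys g"
    using wdeg_lessThan_pos[of \<mu> n] by (fastforce simp: polys_def)
  define c where "c = Poly_Mapping.lookup g 0"
  have "c \<noteq> 0"
    using \<open>0 \<in> Poly_Mapping.keys g\<close> by (simp add: c_def in_keys_iff)
  define g1 where "g1 = restrict_keys (\<lambda>\<mu>. \<mu> \<noteq> 0) g"
  have "g = Poly_Mapping.single 0 c + g1"
    unfolding g1_def c_def
    by (rule poly_mapping_eqI) (simp add: lookup_add lookup_restrict_keys lookup_single when_def)
  then have c_eq: "Poly_Mapping.single 0 c = g + Poly_Mapping.single 0 (-1) * g1"
    by (simp add: mult_single single_uminus)
  have "g1 \<in> wdeg_ideal n {..<n} 1"
    using g_polys wdeg_lessThan_pos[of _ n] by (auto simp: g1_def wdeg_ideal_def polys_def keys_restrict_keys)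
  with M have "Poly_Mapping.single 0 c \<in> P"
    unfolding c_eq by (blast intro: ideal_add[OF P(1) g(1)] ideal_mult_left[OF P(1) polys_const])
  then have "Poly_Mapping.single 0 (inverse c) * Poly_Mapping.single 0 c \<in> P"
    by (rule ideal_mult_left[OF P(1) polys_const])
  with \<open>c \<noteq> 0\<close> P(2) show False
    by (simp add: mult_single)
qed

section \<open>Associated primes of symbolic powers\<close>

(* For the squarefree monomial ideal I whose minimal primes are the P_W, W in Ws,
   this is the symbolic power I^(m). *)
definition symbolic_power :: "nat \<Rightarrow> nat set set \<Rightarrow> nat \<Rightarrow> 'k::field mpoly set" where
  "symbolic_power n Ws m = {p \<in> polys n. \<forall>W\<in>Ws. p \<in> wdeg_ideal n W m}"

lemma is_ideal_symbolic_power: "is_ideal n (symbolic_power n Ws m)"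
  using is_ideal_wdeg_ideal[of n _ m] unfolding is_ideal_def symbolic_power_def
  by (auto simp: polys_add polys_mult)

lemma symbolic_power_mult:
  "p \<in> symbolic_power n Ws a \<Longrightarrow> q \<in> symbolic_power n Ws b \<Longrightarrow> p * q \<in> symbolic_power n Ws (a + b)"
  by (simp add: symbolic_power_def polys_mult wdeg_ideal_mult)

lemma Ass_Inter_subset:
  fixes Q :: "nat set \<Rightarrow> 'k::field mpoly set"
  assumes "finite Ws" and Q: "\<And>W. W \<in> Ws \<Longrightarrow> is_ideal n (Q W)"
  shows "Ass n {p \<in> polys n. \<forall>W\<in>Ws. p \<in> Q W} \<subseteq> (\<Union>W\<in>Ws. Ass n (Q W))"
proof
  fix P
  assume "P \<in> Ass n {p \<in> polys n. \<forall>W\<in>Ws. p \<in> Q W}"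
  then obtain h where P: "prime_ideal n P" and h: "h \<in> polys n"
    and P_eq: "P = {g \<in> polys n. g * h \<in> polys n \<and> (\<forall>W\<in>Ws. g * h \<in> Q W)}"
    by (auto simp: Ass_def)
  have "{g \<in> polys n. \<forall>W\<in>Ws. g \<in> {q \<in> polys n. q * h \<in> Q W}} \<subseteq> P"
    using P_eq h by (auto simp: polys_mult)
  with is_ideal_colon[OF Q h] have "\<exists>W\<in>Ws. {q \<in> polys n. q * h \<in> Q W} \<subseteq> P"
    by (rule prime_ideal_Inter_subset[OF P \<open>finite Ws\<close>])
  then obtain W where W: "W \<in> Ws" "{q \<in> polys n. q * h \<in> Q W} \<subseteq> P"
    by blast
  moreover have "P \<subseteq> {q \<in> polys n. q * h \<in> Q W}"
    using P_eq W(1) by blast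
  ultimately have "P = {q \<in> polys n. q * h \<in> Q W}"
    by blast
  with P h W(1) show "P \<in> (\<Union>W\<in>Ws. Ass n (Q W))"
    unfolding Ass_def by blast
qed

lemma Ass_wdeg_ideal:
  assumes W: "W \<subseteq> {..<n}"
  shows "Ass n (wdeg_ideal n W m :: 'k::field mpoly set) \<subseteq> {wdeg_ideal n W 1}"
proof
  fix P :: "'k mpoly set"
  assume "P \<in> Ass n (wdeg_ideal n W m)"
  then obtain h where P: "prime_ideal n P" and h: "h \<in> polys n"
    and P_eq: "P = {g \<in> polys n. g * h \<in> wdeg_ideal n W m}"
    by (auto simp: Ass_def)
  have fin: "finite W"
    using W by (rule finite_subset) simp
  have "wdeg_ideal n W 1 \<subseteq> P"
  proof (rule wdeg_ideal_1_least[OF W prime_ideal_is_ideal[OF P]])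
    fix i
    assume "i \<in> W"
    with W have i: "i < n"
      by blast
    have "h \<in> wdeg_ideal n W 0"
      using h by simp
    with Var_power_in_wdeg_ideal[OF fin \<open>i \<in> W\<close> i]
    have "(Var i :: 'k mpoly) ^ m * h \<in> wdeg_ideal n W (m + 0)"
      by (rule wdeg_ideal_mult)
    moreover have "(Var i :: 'k mpoly) ^ m \<in> polys n"
      using i by (simp add: Var_power polys_single)
    ultimately have "(Var i :: 'k mpoly) ^ m \<in> P"
      using P_eq by simp
    then show "Var i \<in> P"
      by (rule prime_ideal_power[OF P Var_in_polys[OF i]])
  qed
  moreover have "P \<subseteq> wdeg_ideal n W 1"
  proof
    fix g
    assume g: "g \<in> P"
    have "h \<notin> wdeg_ideal n W m"
      using one_notin_prime_ideal[OF P] P_eq by auto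
    with g h P_eq show "g \<in> wdeg_ideal n W 1"
      using wdeg_ideal_primary[of g n h W m] by blast
  qed
  ultimately show "P \<in> {wdeg_ideal n W 1}"
    by blast
qed

lemma Ass_symbolic_power:
  assumes "finite Ws" "\<And>W. W \<in> Ws \<Longrightarrow> W \<subseteq> {..<n}"
  shows "Ass n (symbolic_power n Ws m :: 'k::field mpoly set) \<subseteq> (\<lambda>W. wdeg_ideal n W 1) ` Ws"
proof -
  have "Ass n (symbolic_power n Ws m :: 'k mpoly set) \<subseteq> (\<Union>W\<in>Ws. Ass n (wdeg_ideal n W m))"
    unfolding symbolic_power_def by (rule Ass_Inter_subset[OF assms(1) is_ideal_wdeg_ideal])
  also have "\<dots> \<subseteq> (\<lambda>W. wdeg_ideal n W 1) ` Ws"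
    using Ass_wdeg_ideal assms(2) by blast
  finally show ?thesis .
qed

lemma minprimes_symbolic_power_1:
  assumes "finite Ws" and Ws: "\<And>W. W \<in> Ws \<Longrightarrow> W \<subseteq> {..<n}"
    and antichain: "\<And>W W'. W \<in> Ws \<Longrightarrow> W' \<in> Ws \<Longrightarrow> W \<subseteq> W' \<Longrightarrow> W = W'"
  shows "minprimes n (symbolic_power n Ws 1 :: 'k::field mpoly set) = (\<lambda>W. wdeg_ideal n W 1) ` Ws"
proof
  have above: "symbolic_power n Ws 1 \<subseteq> (wdeg_ideal n W 1 :: 'k mpoly set)" if "W \<in> Ws" for W
    using that by (auto simp: symbolic_power_def)
  have below: "\<exists>W\<in>Ws. wdeg_ideal n W 1 \<subseteq> Q"
    if "prime_ideal n Q" "symbolic_power n Ws 1 \<subseteq> Q" for Q :: "'k mpoly set"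
    using that(2) unfolding symbolic_power_def
    by (rule prime_ideal_Inter_subset[where Q = "\<lambda>W. wdeg_ideal n W 1", OF that(1) assms(1) is_ideal_wdeg_ideal])
  show "minprimes n (symbolic_power n Ws 1 :: 'k mpoly set) \<subseteq> (\<lambda>W. wdeg_ideal n W 1) ` Ws"
  proof
    fix Q :: "'k mpoly set"
    assume Q: "Q \<in> minprimes n (symbolic_power n Ws 1)"
    then have "prime_ideal n Q" "symbolic_power n Ws 1 \<subseteq> Q"
      by (simp_all add: minprimes_def)
    then obtain W where "W \<in> Ws" "wdeg_ideal n W 1 \<subseteq> Q"
      using below by blast
    then have "wdeg_ideal n W 1 = Q"
      using Q prime_wdeg_ideal_1 above unfolding minprimes_def by blast
    with \<open>W \<in> Ws\<close> show "Q \<in> (\<lambda>W. wdeg_ideal n W 1) ` Ws"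
      by blast
  qed
  show "(\<lambda>W. wdeg_ideal n W 1) ` Ws \<subseteq> minprimes n (symbolic_power n Ws 1 :: 'k mpoly set)"
  proof (clarify)
    fix W
    assume W: "W \<in> Ws"
    have "Q = wdeg_ideal n W 1"
      if Q: "prime_ideal n Q" "symbolic_power n Ws 1 \<subseteq> Q" "Q \<subseteq> wdeg_ideal n W 1"
      for Q :: "'k mpoly set"
    proof -
      obtain W' where W': "W' \<in> Ws" "wdeg_ideal n W' 1 \<subseteq> Q"
        using below[OF Q(1,2)] by blast
      have "finite W"
        using Ws[OF W] by (rule finite_subset) simp
      with W' Q(3) have "W' \<subseteq> W"
        using subset_if_wdeg_ideal_1_subset[OF Ws[OF W'(1)], where 'k = 'k] by blast
      then have "W' = W"
        using antichain[OF W'(1) W] by blast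
      with W' Q(3) show ?thesis
        by blast
    qed
    with W above show "wdeg_ideal n W 1 \<in> minprimes n (symbolic_power n Ws 1 :: 'k mpoly set)"
      unfolding minprimes_def using prime_wdeg_ideal_1 by blast
  qed
qed

lemma wdeg_ideal_1_in_Ass_symbolic_power_1:
  assumes Ws: "\<And>W. W \<in> Ws \<Longrightarrow> W \<subseteq> {..<n}"
    and antichain: "\<And>W W'. W \<in> Ws \<Longrightarrow> W' \<in> Ws \<Longrightarrow> W \<subseteq> W' \<Longrightarrow> W = W'"
    and W: "W \<in> Ws"
  shows "wdeg_ideal n W 1 \<in> Ass n (symbolic_power n Ws 1 :: 'k::field mpoly set)"
proof -
  define f where "f = (monom (indicator_exp ({..<n} - W)) :: 'k mpoly)"
  have f_polys: "f \<in> polys n"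
    unfolding f_def by (rule polys_single) (simp add: keys_indicator_exp)
  have f_in_iff: "f \<in> wdeg_ideal n W' 1 \<longleftrightarrow> \<not> W' \<subseteq> W" if "W' \<in> Ws" for W'
    unfolding f_def using Ws[OF that] by (rule monom_compl_in_wdeg_ideal_1_iff)
  have "wdeg_ideal n W 1 = {g \<in> polys n. g * f \<in> symbolic_power n Ws 1}"
  proof (intro set_eqI iffI)
    fix g :: "'k mpoly"
    assume g: "g \<in> wdeg_ideal n W 1"
    then have g_polys: "g \<in> polys n"
      by (simp add: wdeg_ideal_def)
    have "g * f \<in> wdeg_ideal n W' 1" if W': "W' \<in> Ws" for W'
    proof (cases "W' = W")
      case True
      then show ?thesis
        using ideal_mult_right[OF is_ideal_wdeg_ideal f_polys g] by simp
    next
      case False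
      then have "f \<in> wdeg_ideal n W' 1"
        using f_in_iff[OF W'] antichain[OF W' W] by blast
      then show ?thesis
        by (rule ideal_mult_left[OF is_ideal_wdeg_ideal g_polys])
    qed
    with g_polys f_polys show "g \<in> {g \<in> polys n. g * f \<in> symbolic_power n Ws 1}"
      by (simp add: symbolic_power_def polys_mult)
  next
    fix g :: "'k mpoly"
    assume "g \<in> {g \<in> polys n. g * f \<in> symbolic_power n Ws 1}"
    then have "g \<in> polys n" "g * f \<in> wdeg_ideal n W 1"
      using W by (auto simp: symbolic_power_def)
    moreover have "f \<notin> wdeg_ideal n W 1"
      using f_in_iff[OF W] by blast
    ultimately show "g \<in> wdeg_ideal n W 1"
      using prime_idealD[OF prime_wdeg_ideal_1] f_polys by blast
  qed
  with f_polys show ?thesis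
    unfolding Ass_def using prime_wdeg_ideal_1 by blast
qed

lemma Ass_symbolic_power_1:
  assumes "finite Ws" and "\<And>W. W \<in> Ws \<Longrightarrow> W \<subseteq> {..<n}"
    and "\<And>W W'. W \<in> Ws \<Longrightarrow> W' \<in> Ws \<Longrightarrow> W \<subseteq> W' \<Longrightarrow> W = W'"
  shows "Ass n (symbolic_power n Ws 1 :: 'k::field mpoly set) = minprimes n (symbolic_power n Ws 1)"
proof -
  have "Ass n (symbolic_power n Ws 1 :: 'k mpoly set) \<subseteq> (\<lambda>W. wdeg_ideal n W 1) ` Ws"
    by (rule Ass_symbolic_power[OF assms(1,2)])
  moreover have "(\<lambda>W. wdeg_ideal n W 1) ` Ws \<subseteq> Ass n (symbolic_power n Ws 1 :: 'k mpoly set)"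
    unfolding image_subset_iff using wdeg_ideal_1_in_Ass_symbolic_power_1[OF assms(2,3)] by blast
  ultimately have "Ass n (symbolic_power n Ws 1 :: 'k mpoly set) = (\<lambda>W. wdeg_ideal n W 1) ` Ws"
    by (rule equalityI)
  moreover have "minprimes n (symbolic_power n Ws 1 :: 'k mpoly set) = (\<lambda>W. wdeg_ideal n W 1) ` Ws"
    by (rule minprimes_symbolic_power_1[OF assms])
  ultimately show ?thesis
    by (simp only:)
qed

lemma Ass_subset_Ass_if_mult_subset:
  assumes J: "is_ideal n J" and "I \<subseteq> J" and x: "x \<in> polys n"
    and xJ: "\<And>q. q \<in> J \<Longrightarrow> x * q \<in> I" and "P \<in> Ass n I" and "x \<notin> P"
  shows "P \<in> Ass n J"
proof -
  obtain f where P: "prime_ideal n P" and f: "f \<in> polys n" and P_eq: "P = {g \<in> polys n. g * f \<in> I}"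
    using \<open>P \<in> Ass n I\<close> by (auto simp: Ass_def)
  have "P = {g \<in> polys n. g * (x * f) \<in> J}"
  proof (intro set_eqI iffI)
    fix g
    assume "g \<in> P"
    then have g: "g \<in> polys n" "g * f \<in> J"
      using P_eq \<open>I \<subseteq> J\<close> by auto
    have "x * (g * f) \<in> J"
      by (rule ideal_mult_left[OF J x g(2)])
    with g(1) show "g \<in> {g \<in> polys n. g * (x * f) \<in> J}"
      by (simp add: mult_ac)
  next
    fix g
    assume "g \<in> {g \<in> polys n. g * (x * f) \<in> J}"
    then have g: "g \<in> polys n" "g * (x * f) \<in> J"
      by auto
    have "(g * x * x) * f \<in> I"
      using xJ[OF g(2)] by (simp add: mult_ac)
    then have "g * x * x \<in> P"
      using P_eq g(1) x by (simp add: polys_mult)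
    then have "g * x \<in> P"
      using prime_idealD[OF P polys_mult[OF g(1) x] x] \<open>x \<notin> P\<close> by blast
    then show "g \<in> P"
      using prime_idealD[OF P g(1) x] \<open>x \<notin> P\<close> by blast
  qed
  moreover have "x * f \<in> polys n"
    by (rule polys_mult[OF x f])
  ultimately show ?thesis
    unfolding Ass_def using P by blast
qed

section \<open>The cycle and its dominating ideal\<close>

definition cyc_succ :: "nat \<Rightarrow> nat \<Rightarrow> nat" where
  "cyc_succ n v = (if Suc v = n then 0 else Suc v)"

definition cyc_pred :: "nat \<Rightarrow> nat \<Rightarrow> nat" where
  "cyc_pred n v = (if v = 0 then n - 1 else v - 1)"

lemma Suc_mod_eq_cyc_succ: "v < n \<Longrightarrow> Suc v mod n = cyc_succ n v"
  by (auto simp: mod_if cyc_succ_def)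

lemma cycle_adj_iff:
  assumes "n \<ge> 3" "v < n"
  shows "cycle_adj n v u \<longleftrightarrow> u = cyc_succ n v \<or> u = cyc_pred n v"
proof
  assume "cycle_adj n v u"
  then have u: "u < n" "v \<noteq> u" "u = Suc v mod n \<or> v = Suc u mod n"
    by (auto simp: cycle_adj_def)
  then have "u = cyc_succ n v \<or> v = cyc_succ n u"
    using assms(2) by (simp add: Suc_mod_eq_cyc_succ)
  with u assms(2) show "u = cyc_succ n v \<or> u = cyc_pred n v"
    by (auto simp: cyc_succ_def cyc_pred_def split: if_splits)
next
  assume "u = cyc_succ n v \<or> u = cyc_pred n v"
  with assms show "cycle_adj n v u"
    by (auto simp: cycle_adj_def Suc_mod_eq_cyc_succ cyc_succ_def cyc_pred_def split: if_splits)
qed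

lemma closed_nbhd_cycle:
  "n \<ge> 3 \<Longrightarrow> v < n \<Longrightarrow> closed_nbhd n v = {v, cyc_succ n v, cyc_pred n v}"
  by (auto simp: closed_nbhd_def cycle_adj_iff)

lemma card_closed_nbhd: "n \<ge> 3 \<Longrightarrow> v < n \<Longrightarrow> card (closed_nbhd n v) = 3"
  by (simp add: closed_nbhd_cycle cyc_succ_def cyc_pred_def)

lemma closed_nbhd_subset: "v < n \<Longrightarrow> closed_nbhd n v \<subseteq> {..<n}"
  by (auto simp: closed_nbhd_def cycle_adj_def)

lemma finite_closed_nbhd: "finite (closed_nbhd n v)"
proof -
  have "closed_nbhd n v \<subseteq> insert v {..<n}"
    by (auto simp: closed_nbhd_def cycle_adj_def)
  then show ?thesis
    by (rule finite_subset) simp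
qed

lemma wdeg_closed_nbhd:
  assumes "n \<ge> 3" "v < n"
  shows "wdeg (closed_nbhd n v) \<mu>
    = Poly_Mapping.lookup \<mu> v + Poly_Mapping.lookup \<mu> (cyc_succ n v) + Poly_Mapping.lookup \<mu> (cyc_pred n v)"
proof -
  have "v \<noteq> cyc_succ n v" "v \<noteq> cyc_pred n v" "cyc_succ n v \<noteq> cyc_pred n v"
    using assms by (auto simp: cyc_succ_def cyc_pred_def)
  then show ?thesis
    by (simp add: wdeg_def closed_nbhd_cycle[OF assms])
qed

abbreviation nbhds :: "nat \<Rightarrow> nat set set" where
  "nbhds n \<equiv> closed_nbhd n ` {..<n}"

lemma nbhds_subset: "W \<in> nbhds n \<Longrightarrow> W \<subseteq> {..<n}"
  using closed_nbhd_subset by blast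

lemma nbhds_antichain:
  assumes n: "n \<ge> 3" and "W \<in> nbhds n" "W' \<in> nbhds n" "W \<subseteq> W'"
  shows "W = W'"
proof -
  obtain u v where "u < n" "v < n" "W = closed_nbhd n u" "W' = closed_nbhd n v"
    using assms(2,3) by blast
  then have "finite W'" "card W = card W'"
    using card_closed_nbhd[OF n] finite_closed_nbhd by simp_all
  then show ?thesis
    using card_subset_eq[of W' W] \<open>W \<subseteq> W'\<close> by blast
qed

lemma dominating_imp_minimal_subset:
  assumes "dominating n S"
  shows "\<exists>T\<subseteq>S. minimal_dominating n T"
proof -
  have "finite S"
    using assms finite_subset by (auto simp: dominating_def)
  then show ?thesis
    using assms
  proof (induction "card S" arbitrary: S rule: less_induct)
    case less
    show ?case
    proof (cases "minimal_dominating n S")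
      case False
      then obtain T where T: "T \<subset> S" "dominating n T"
        using less.prems(2) by (auto simp: minimal_dominating_def)
      then have "card T < card S" "finite T"
        using less.prems(1) by (auto intro: psubset_card_mono finite_subset)
      then show ?thesis
        using less.hyps[of T] T by blast
    qed blast
  qed
qed

lemma DI_generators_polys:
  "{(\<Prod>i\<in>S. Var i) | S. minimal_dominating n S} \<subseteq> (polys n :: 'k::field mpoly set)"
proof
  fix p :: "'k mpoly"
  assume "p \<in> {(\<Prod>i\<in>S. Var i) | S. minimal_dominating n S}"
  then obtain S where S: "minimal_dominating n S" "p = (\<Prod>i\<in>S. Var i)"
    by blast
  then have "S \<subseteq> {..<n}"
    by (simp add: minimal_dominating_def dominating_def)
  moreover have "finite S"
    using calculation by (rule finite_subset) simp
  ultimately show "p \<in> polys n"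
    using S(2) by (simp add: prod_Var_eq_monom keys_indicator_exp polys_single)
qed

lemma is_ideal_DI: "is_ideal n (dominating_ideal_cycle n)"
  unfolding dominating_ideal_cycle_def by (rule is_ideal_ideal_gen[OF DI_generators_polys])

lemma monom_dominating_in_DI:
  assumes D: "dominating n D"
  shows "(monom (indicator_exp D) :: 'k::field mpoly) \<in> dominating_ideal_cycle n"
proof -
  obtain T where T: "T \<subseteq> D" "minimal_dominating n T"
    using dominating_imp_minimal_subset[OF D] by blast
  have D_sub: "D \<subseteq> {..<n}"
    using D by (simp add: dominating_def)
  then have fin: "finite D"
    by (rule finite_subset) simp
  then have "finite T"
    using T(1) finite_subset by blast
  have "(\<Prod>i\<in>T. Var i :: 'k mpoly) \<in> {(\<Prod>i\<in>S. Var i) | S. minimal_dominating n S}"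
    using T(2) by blast
  then have "(monom (indicator_exp T) :: 'k mpoly) \<in> dominating_ideal_cycle n"
    unfolding dominating_ideal_cycle_def prod_Var_eq_monom by (rule subsetD[OF ideal_gen_superset])
  moreover have "Poly_Mapping.lookup (indicator_exp T) i \<le> Poly_Mapping.lookup (indicator_exp D) i" for i
    using T(1) fin \<open>finite T\<close> by (auto simp: lookup_indicator_exp)
  moreover have "Poly_Mapping.keys (indicator_exp D) \<subseteq> {..<n}"
    using D_sub fin by (simp add: keys_indicator_exp)
  ultimately show ?thesis
    by (rule monom_mem_ideal_mono[OF is_ideal_DI])
qed

lemma DI_subset_symbolic_power:
  "dominating_ideal_cycle n \<subseteq> (symbolic_power n (nbhds n) 1 :: 'k::field mpoly set)"
  unfolding dominating_ideal_cycle_def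
proof (rule ideal_gen_least[OF is_ideal_symbolic_power], rule subsetI)
  fix p :: "'k mpoly"
  assume "p \<in> {(\<Prod>i\<in>S. Var i) | S. minimal_dominating n S}"
  then obtain S where S: "dominating n S" "p = monom (indicator_exp S)"
    by (auto simp: prod_Var_eq_monom minimal_dominating_def)
  then have S_sub: "S \<subseteq> {..<n}"
    by (simp add: dominating_def)
  then have fin: "finite S"
    by (rule finite_subset) simp
  have "p \<in> wdeg_ideal n (closed_nbhd n v) 1" if v: "v < n" for v
  proof -
    have "S \<inter> closed_nbhd n v \<noteq> {}"
      using S(1) v by (simp add: dominating_def)
    with S_sub fin S(2) show ?thesis
      using monom_in_wdeg_ideal_1_iff[OF finite_closed_nbhd, of "indicator_exp S" n, where 'k = 'k]
      by (simp add: keys_indicator_exp)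
  qed
  with S(2) S_sub fin show "p \<in> symbolic_power n (nbhds n) 1"
    by (auto simp: symbolic_power_def polys_single keys_indicator_exp)
qed

lemma symbolic_power_subset_DI:
  "(symbolic_power n (nbhds n) 1 :: 'k::field mpoly set) \<subseteq> dominating_ideal_cycle n"
proof
  fix p :: "'k mpoly"
  assume p: "p \<in> symbolic_power n (nbhds n) 1"
  show "p \<in> dominating_ideal_cycle n"
  proof (rule ideal_mem_if_monoms_mem[OF is_ideal_DI])
    show "p \<in> polys n"
      using p by (simp add: symbolic_power_def)
    fix \<mu>
    assume \<mu>: "\<mu> \<in> Poly_Mapping.keys p"
    then have keys: "Poly_Mapping.keys \<mu> \<subseteq> {..<n}"
      using p by (simp add: symbolic_power_def polys_def)
    have "Poly_Mapping.keys \<mu> \<inter> closed_nbhd n v \<noteq> {}" if "v < n" for v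
    proof -
      have "1 \<le> wdeg (closed_nbhd n v) \<mu>"
        using p \<mu> that by (auto simp: symbolic_power_def wdeg_ideal_def)
      then show ?thesis
        using one_le_wdeg_iff[OF finite_closed_nbhd] by blast
    qed
    with keys have "dominating n (Poly_Mapping.keys \<mu>)"
      by (simp add: dominating_def)
    then have "(monom (indicator_exp (Poly_Mapping.keys \<mu>)) :: 'k mpoly) \<in> dominating_ideal_cycle n"
      by (rule monom_dominating_in_DI)
    moreover have "Poly_Mapping.lookup (indicator_exp (Poly_Mapping.keys \<mu>)) i \<le> Poly_Mapping.lookup \<mu> i" for i
      by (simp add: lookup_indicator_exp in_keys_iff)
    ultimately show "(monom \<mu> :: 'k mpoly) \<in> dominating_ideal_cycle n"
      using keys by (rule monom_mem_ideal_mono[OF is_ideal_DI])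
  qed
qed

lemma DI_eq_symbolic_power:
  "dominating_ideal_cycle n = (symbolic_power n (nbhds n) 1 :: 'k::field mpoly set)"
  by (rule equalityI[OF DI_subset_symbolic_power symbolic_power_subset_DI])

lemma ideal_pow_DI_subset:
  "ideal_pow n (dominating_ideal_cycle n) m \<subseteq> (symbolic_power n (nbhds n) m :: 'k::field mpoly set)"
proof (induction m)
  case 0
  then show ?case
    by (auto simp: symbolic_power_def)
next
  case (Suc m)
  have "{f * g | f g. f \<in> dominating_ideal_cycle n \<and> g \<in> ideal_pow n (dominating_ideal_cycle n) m}
      \<subseteq> (symbolic_power n (nbhds n) (Suc m) :: 'k mpoly set)"
  proof
    fix x :: "'k mpoly"
    assume "x \<in> {f * g | f g. f \<in> dominating_ideal_cycle n \<and> g \<in> ideal_pow n (dominating_ideal_cycle n) m}"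
    then obtain f g where x: "x = f * g" "f \<in> dominating_ideal_cycle n"
      "g \<in> ideal_pow n (dominating_ideal_cycle n) m"
      by blast
    then have "f * g \<in> symbolic_power n (nbhds n) (1 + m)"
      using Suc.IH DI_eq_symbolic_power by (intro symbolic_power_mult) auto
    with x(1) show "x \<in> symbolic_power n (nbhds n) (Suc m)"
      by simp
  qed
  then show ?case
    unfolding ideal_pow.simps by (rule ideal_gen_least[OF is_ideal_symbolic_power])
qed

lemma minprimes_DI:
  assumes "n \<ge> 3"
  shows "minprimes n (dominating_ideal_cycle n :: 'k::field mpoly set) = (\<lambda>W. wdeg_ideal n W 1) ` nbhds n"
  unfolding DI_eq_symbolic_power
  by (rule minprimes_symbolic_power_1[OF finite_imageI[OF finite_lessThan] nbhds_subset nbhds_antichain[OF assms]])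

lemma Ass_DI:
  assumes "n \<ge> 3"
  shows "Ass n (dominating_ideal_cycle n :: 'k::field mpoly set) = minprimes n (dominating_ideal_cycle n)"
  unfolding DI_eq_symbolic_power
  by (rule Ass_symbolic_power_1[OF finite_imageI[OF finite_lessThan] nbhds_subset nbhds_antichain[OF assms]])

section \<open>Dealing a monomial of the symbolic power into dominating sets\<close>

definition cyc_add :: "nat \<Rightarrow> nat \<Rightarrow> nat \<Rightarrow> nat" where
  "cyc_add n j p = (if j + p < n then j + p else j + p - n)"

lemma cyc_add_lt: "j < n \<Longrightarrow> p < n \<Longrightarrow> cyc_add n j p < n"
  unfolding cyc_add_def by (split if_split) arith

lemma cyc_add_0: "j < n \<Longrightarrow> cyc_add n j 0 = j"
  by (simp add: cyc_add_def)

lemma cyc_add_Suc: "j < n \<Longrightarrow> Suc p < n \<Longrightarrow> cyc_add n j (Suc p) = cyc_succ n (cyc_add n j p)"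
  by (auto simp: cyc_add_def cyc_succ_def)

lemma cyc_add_pred: "j < n \<Longrightarrow> 0 < p \<Longrightarrow> p < n \<Longrightarrow> cyc_add n j (p - 1) = cyc_pred n (cyc_add n j p)"
  by (auto simp: cyc_add_def cyc_pred_def)

lemma cyc_succ_cyc_add_last: "j < n \<Longrightarrow> cyc_succ n (cyc_add n j (n - 1)) = j"
  by (auto simp: cyc_add_def cyc_succ_def)

lemma cyc_add_surj: "j < n \<Longrightarrow> t < n \<Longrightarrow> \<exists>p<n. cyc_add n j p = t"
proof (cases "j \<le> t")
  case True
  then show "j < n \<Longrightarrow> t < n \<Longrightarrow> ?thesis"
    by (intro exI[of _ "t - j"]) (simp add: cyc_add_def)
next
  case False
  then show "j < n \<Longrightarrow> t < n \<Longrightarrow> ?thesis"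
    by (intro exI[of _ "t + n - j"]) (simp add: cyc_add_def)
qed

lemma cyc_add_inj: "j < n \<Longrightarrow> p < n \<Longrightarrow> q < n \<Longrightarrow> cyc_add n j p = cyc_add n j q \<Longrightarrow> p = q"
  unfolding cyc_add_def by (split if_split_asm if_split; arith)

lemma cyc_add_window:
  assumes n: "n \<ge> 3" and j: "j < n" and v: "v < n" and j_notin: "j \<notin> closed_nbhd n v"
  obtains q where "0 < q" "Suc (Suc q) < n" "cyc_add n j q = cyc_pred n v"
    "cyc_add n j (Suc q) = v" "cyc_add n j (Suc (Suc q)) = cyc_succ n v"
proof -
  obtain p where p: "p < n" "cyc_add n j p = v"
    using cyc_add_surj[OF j v] by blast
  have nbhd: "closed_nbhd n v = {v, cyc_succ n v, cyc_pred n v}"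
    by (rule closed_nbhd_cycle[OF n v])
  have "p \<noteq> 0"
  proof
    assume "p = 0"
    with p(2) have "v = j"
      by (simp add: cyc_add_0[OF j])
    with j_notin nbhd show False
      by simp
  qed
  moreover have "p \<noteq> 1"
  proof
    assume "p = 1"
    with p have "cyc_pred n v = j"
      using cyc_add_pred[OF j, of 1] by (simp add: cyc_add_0[OF j])
    with j_notin nbhd show False
      by simp
  qed
  moreover have "p \<noteq> n - 1"
  proof
    assume "p = n - 1"
    with p(2) have "cyc_succ n v = j"
      using cyc_succ_cyc_add_last[OF j] by simp
    with j_notin nbhd show False
      by simp
  qed
  ultimately have q: "0 < p - 1" "Suc (Suc (p - 1)) < n" "Suc (p - 1) = p"
    using p(1) by auto
  show thesis
  proof (rule that[OF q(1,2)])
    show "cyc_add n j (p - 1) = cyc_pred n v"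
      using cyc_add_pred[OF j] q(1) p by simp
    show "cyc_add n j (Suc (p - 1)) = v"
      using q(3) p(2) by simp
    show "cyc_add n j (Suc (Suc (p - 1))) = cyc_succ n v"
      using cyc_add_Suc[OF j] q p by simp
  qed
qed

lemma exists_mod_eq_in_interval:
  assumes "(k :: nat) < m"
  shows "\<exists>e. x \<le> e \<and> e < x + m \<and> e mod m = k"
proof -
  have x: "x div m * m + x mod m = x" "x mod m < m"
    using assms by simp_all
  show ?thesis
  proof (cases "x mod m \<le> k")
    case True
    have "(x div m * m + k) mod m = k"
      using assms by simp
    with x True assms show ?thesis
      by (intro exI[of _ "x div m * m + k"] conjI) linarith+
  next
    case False
    have "((x div m + 1) * m + k) mod m = k"
      using assms by (metis mod_mult_self3 mod_less)
    moreover have "(x div m + 1) * m = x div m * m + m"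
      by simp
    ultimately show ?thesis
      using x False by (intro exI[of _ "(x div m + 1) * m + k"] conjI) linarith+
  qed
qed

lemma block_containing:
  fixes S :: "nat \<Rightarrow> nat"
  assumes "a \<le> b" "S a \<le> e"
  shows "e < S b \<Longrightarrow> \<exists>q. a \<le> q \<and> q < b \<and> S q \<le> e \<and> e < S (Suc q)"
  using assms(1)
proof (induction b rule: dec_induct)
  case base
  with assms(2) show ?case
    by simp
next
  case (step b)
  show ?case
  proof (cases "e < S b")
    case True
    with step show ?thesis
      using less_SucI by blast
  next
    case False
    with step show ?thesis
      by (intro exI[of _ b]) auto
  qed
qed

context
  fixes n j m :: nat and w :: "nat \<Rightarrow> nat"
begin

(* Walking around the cycle from j, the p-th vertex owns the block of integers
   [block_start p, block_start (p + 1)), of length its weight.  The k-th set takes j and every other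
   vertex whose block meets the residue class of k modulo m. *)
definition block_start :: "nat \<Rightarrow> nat" where
  "block_start p = (\<Sum>q<p. w (cyc_add n j q))"

definition residue_set :: "nat \<Rightarrow> nat set" where
  "residue_set k = insert j {cyc_add n j p | p. 0 < p \<and> p < n \<and>
     k \<in> (\<lambda>e. e mod m) ` {block_start p..<block_start (Suc p)}}"

lemma residue_set_dominating:
  assumes n: "n \<ge> 3" and j: "j < n" and k: "k < m"
    and w: "\<And>v. v < n \<Longrightarrow> m \<le> w (cyc_pred n v) + w v + w (cyc_succ n v)"
  shows "dominating n (residue_set k)"
  unfolding dominating_def
proof (intro conjI allI impI)
  show "residue_set k \<subseteq> {..<n}"
    using j cyc_add_lt[OF j] by (auto simp: residue_set_def)
  fix v
  assume v: "v < n"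
  show "residue_set k \<inter> closed_nbhd n v \<noteq> {}"
  proof (cases "j \<in> closed_nbhd n v")
    case False
    then obtain q where q: "0 < q" "Suc (Suc q) < n" "cyc_add n j q = cyc_pred n v"
      "cyc_add n j (Suc q) = v" "cyc_add n j (Suc (Suc q)) = cyc_succ n v"
      using cyc_add_window[OF n j v] by blast
    have "block_start q + m \<le> block_start (q + 3)"
      using w[OF v] q(3-5) by (simp add: block_start_def numeral_3_eq_3)
    moreover obtain e where e: "block_start q \<le> e" "e < block_start q + m" "e mod m = k"
      using exists_mod_eq_in_interval[OF k] by blast
    ultimately obtain r where r: "q \<le> r" "r < q + 3" "block_start r \<le> e" "e < block_start (Suc r)"
      using block_containing[of q "q + 3" block_start e] by auto
    have "k \<in> (\<lambda>e. e mod m) ` {block_start r..<block_start (Suc r)}"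
      using r(3,4) e(3) by force
    moreover have "0 < r" "r < n"
      using q(1,2) r(1,2) by linarith+
    ultimately have "cyc_add n j r \<in> residue_set k"
      unfolding residue_set_def by blast
    moreover have "r = q \<or> r = Suc q \<or> r = Suc (Suc q)"
      using r(1,2) by auto
    then have "cyc_add n j r \<in> closed_nbhd n v"
      using q(3-5) closed_nbhd_cycle[OF n v] by auto
    ultimately show ?thesis
      by blast
  qed (auto simp: residue_set_def)
qed

lemma card_residue_sets_le:
  assumes j: "j < n"
  shows "card {k \<in> {..<m}. t \<in> residue_set k} \<le> w t + (if j = t then m else 0)"
proof (cases "t = j")
  case True
  have "card {k \<in> {..<m}. t \<in> residue_set k} \<le> card {..<m}"
    by (rule card_mono) auto
  with True show ?thesis
    by simp
next
  case t_ne_j: False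
  show ?thesis
  proof (cases "t < n")
    case True
    then obtain p where p: "p < n" "cyc_add n j p = t"
      using cyc_add_surj[OF j] by blast
    have "{k \<in> {..<m}. t \<in> residue_set k} \<subseteq> (\<lambda>e. e mod m) ` {block_start p..<block_start (Suc p)}"
      using p t_ne_j cyc_add_inj[OF j] by (auto simp: residue_set_def)
    then have "card {k \<in> {..<m}. t \<in> residue_set k}
        \<le> card ((\<lambda>e. e mod m) ` {block_start p..<block_start (Suc p)})"
      by (rule card_mono[rotated]) simp
    also have "\<dots> \<le> card {block_start p..<block_start (Suc p)}"
      by (rule card_image_le) simp
    also have "\<dots> = w t"
      using p(2) by (simp add: block_start_def)
    finally show ?thesis
      by simp
  next
    case False
    then have "t \<notin> residue_set k" for k
      using j cyc_add_lt[OF j] by (auto simp: residue_set_def)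
    then show ?thesis
      by simp
  qed
qed

end

lemma monom_add_single_in_ideal_pow_DI:
  assumes n: "n \<ge> 3" and j: "j < n" and keys: "Poly_Mapping.keys \<mu> \<subseteq> {..<n}"
    and deg: "\<And>v. v < n \<Longrightarrow> m \<le> wdeg (closed_nbhd n v) \<mu>"
  shows "(monom (\<mu> + Poly_Mapping.single j m) :: 'k::field mpoly) \<in> ideal_pow n (dominating_ideal_cycle n) m"
proof -
  have w: "m \<le> Poly_Mapping.lookup \<mu> (cyc_pred n v) + Poly_Mapping.lookup \<mu> v
      + Poly_Mapping.lookup \<mu> (cyc_succ n v)" if "v < n" for v
    using deg[OF that] wdeg_closed_nbhd[OF n that, of \<mu>] by simp
  define D where "D = residue_set n j m (Poly_Mapping.lookup \<mu>)"
  have D_dom: "dominating n (D k)" if "k < m" for k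
    unfolding D_def by (rule residue_set_dominating[OF n j that w])
  have fin: "finite (D k)" if "k < m" for k
  proof -
    have "D k \<subseteq> {..<n}"
      using D_dom[OF that] by (simp add: dominating_def)
    then show ?thesis
      by (rule finite_subset) simp
  qed
  define E where "E = (\<Sum>k<m. indicator_exp (D k))"
  have "(\<Prod>k<m. monom (indicator_exp (D k)) :: 'k mpoly) \<in> ideal_pow n (dominating_ideal_cycle n) m"
    using D_dom by (intro prod_mem_ideal_pow monom_dominating_in_DI)
  then have "(monom E :: 'k mpoly) \<in> ideal_pow n (dominating_ideal_cycle n) m"
    by (simp add: E_def prod_monom)
  moreover have "Poly_Mapping.lookup E t \<le> Poly_Mapping.lookup (\<mu> + Poly_Mapping.single j m) t" for t
  proof -
    have "Poly_Mapping.lookup E t = card {k \<in> {..<m}. t \<in> D k}"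
      unfolding E_def using fin by (intro lookup_sum_indicator_exp) auto
    also have "\<dots> \<le> Poly_Mapping.lookup (\<mu> + Poly_Mapping.single j m) t"
      using card_residue_sets_le[OF j, where w = "Poly_Mapping.lookup \<mu>" and m = m and t = t]
      by (simp add: D_def lookup_add lookup_single when_def)
    finally show ?thesis .
  qed
  moreover have "Poly_Mapping.keys (\<mu> + Poly_Mapping.single j m) \<subseteq> {..<n}"
    using keys j by (auto simp: keys_add_nat)
  ultimately show ?thesis
    by (rule monom_mem_ideal_mono[OF is_ideal_ideal_pow[OF is_ideal_DI]])
qed

section \<open>Associated primes of the powers of the dominating ideal\<close>

lemma Var_power_mult_symbolic_power_in_ideal_pow:
  assumes n: "n \<ge> 3" and j: "j < n" and q: "q \<in> symbolic_power n (nbhds n) m"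
  shows "(Var j :: 'k::field mpoly) ^ m * q \<in> ideal_pow n (dominating_ideal_cycle n) m"
proof -
  have x: "(Var j :: 'k mpoly) ^ m \<in> polys n"
    using j by (simp add: Var_power polys_single)
  have "q \<in> {q \<in> polys n. q * Var j ^ m \<in> ideal_pow n (dominating_ideal_cycle n) m}"
  proof (rule ideal_mem_if_monoms_mem[OF is_ideal_colon[OF is_ideal_ideal_pow[OF is_ideal_DI] x]])
    show q_polys: "q \<in> polys n"
      using q by (simp add: symbolic_power_def)
    fix \<mu>
    assume \<mu>: "\<mu> \<in> Poly_Mapping.keys q"
    then have keys: "Poly_Mapping.keys \<mu> \<subseteq> {..<n}"
      using q_polys by (simp add: polys_def)
    have "m \<le> wdeg (closed_nbhd n v) \<mu>" if "v < n" for v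
      using q \<mu> that by (auto simp: symbolic_power_def wdeg_ideal_def)
    then have "(monom (\<mu> + Poly_Mapping.single j m) :: 'k mpoly) \<in> ideal_pow n (dominating_ideal_cycle n) m"
      by (rule monom_add_single_in_ideal_pow_DI[OF n j keys])
    moreover have "(monom \<mu> :: 'k mpoly) * Var j ^ m = monom (\<mu> + Poly_Mapping.single j m)"
      by (simp add: Var_power mult_single)
    ultimately show "(monom \<mu> :: 'k mpoly) \<in> {q \<in> polys n. q * Var j ^ m \<in> ideal_pow n (dominating_ideal_cycle n) m}"
      using keys by (simp add: polys_single)
  qed
  then show ?thesis
    by (simp add: mult.commute)
qed

lemma Ass_ideal_pow_DI:
  assumes n: "n \<ge> 3"
  shows "Ass n (ideal_pow n (dominating_ideal_cycle n) m)
    \<subseteq> minprimes n (dominating_ideal_cycle n) \<union> {wdeg_ideal n {..<n} 1 :: 'k::field mpoly set}"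
proof
  fix P :: "'k mpoly set"
  assume P: "P \<in> Ass n (ideal_pow n (dominating_ideal_cycle n) m)"
  then have P_prime: "prime_ideal n P"
    by (simp add: Ass_def)
  show "P \<in> minprimes n (dominating_ideal_cycle n) \<union> {wdeg_ideal n {..<n} 1}"
  proof (cases "\<forall>j<n. (Var j :: 'k mpoly) \<in> P")
    case True
    then have "wdeg_ideal n {..<n} 1 \<subseteq> P"
      by (intro wdeg_ideal_1_least[OF _ prime_ideal_is_ideal[OF P_prime]]) auto
    then have "P = wdeg_ideal n {..<n} 1"
      by (rule wdeg_ideal_lessThan_maximal[OF prime_ideal_is_ideal[OF P_prime] one_notin_prime_ideal[OF P_prime]])
    then show ?thesis
      by simp
  next
    case False
    then obtain j where j: "j < n" "(Var j :: 'k mpoly) \<notin> P"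
      by blast
    have x: "(Var j :: 'k mpoly) ^ m \<in> polys n" "(Var j :: 'k mpoly) ^ m \<notin> P"
      using j prime_ideal_power[OF P_prime Var_in_polys[OF j(1)]] by (auto simp: Var_power polys_single)
    have "P \<in> Ass n (symbolic_power n (nbhds n) m)"
      using Var_power_mult_symbolic_power_in_ideal_pow[OF n j(1)]
      by (rule Ass_subset_Ass_if_mult_subset[OF is_ideal_symbolic_power ideal_pow_DI_subset x(1) _ P x(2)])
    then show ?thesis
      using Ass_symbolic_power[of "nbhds n" n m] nbhds_subset minprimes_DI[OF n] by blast
  qed
qed

theorem theorem3p9:
  fixes n :: nat
  assumes "n \<ge> 3"
  shows "nearly_normally_torsion_free n (dominating_ideal_cycle n :: 'k::field mpoly set)"
  unfolding nearly_normally_torsion_free_def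
proof (intro exI conjI allI impI)
  let ?I = "dominating_ideal_cycle n :: 'k mpoly set"
  show "monomial_ideal n (wdeg_ideal n {..<n} 1 :: 'k mpoly set)"
    by (rule monomial_ideal_wdeg_ideal_1) simp
  show "prime_ideal n (wdeg_ideal n {..<n} 1 :: 'k mpoly set)"
    by (rule prime_wdeg_ideal_1)
  fix m :: nat
  show "Ass n (ideal_pow n ?I m) = minprimes n ?I" if "1 \<le> m \<and> m \<le> 1"
  proof -
    from that have "m = 1"
      by simp
    then show ?thesis
      using Ass_DI[OF assms] by (simp only: ideal_pow_1[OF is_ideal_DI])
  qed
  show "Ass n (ideal_pow n ?I m) \<subseteq> minprimes n ?I \<union> {wdeg_ideal n {..<n} 1}" if "1 + 1 \<le> m"
    by (rule Ass_ideal_pow_DI[OF assms])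
qed (rule order_refl)

end
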